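(* Let $X=\{x_j:j\in J\}\subset\mathbb{R}^2$ be finite with $n=|J|$ and quadratic min-power centre $s^*$. There exist multipliers $\lambda_j\geq0$, $j\in J$, at most $3$ of which are nonzero, such that $s^*=\sum_{j\in J}\lambda_jM_j$, $\sum_{j\in J}\lambda_j=1$, and $\lambda_j\big(\|s^*-x_j\|-\max_{i\in J}\|s^*-x_i\|\big)=0$ for all $j\in J$.
   Context: $s^*$ is the unique minimiser of $P(s)=\sum_{i\in J}\|s-x_i\|^2+\max_{i\in J}\|s-x_i\|^2$; $M_j=\frac{1}{n+1}\big(x_j+\sum_{i\in J}x_i\big)$. *)

theory Defs
  imports "HOL-Analysis.Analysis"
begin

definition qmp_P :: "'a set \<Rightarrow> ('a \<Rightarrow> real^2) \<Rightarrow> real^2 \<Rightarrow> real" where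
  "qmp_P J x s = (\<Sum>i\<in>J. (norm (s - x i))\<^sup>2) + Max ((\<lambda>i. (norm (s - x i))\<^sup>2) ` J)"

definition qmp_M :: "'a set \<Rightarrow> ('a \<Rightarrow> real^2) \<Rightarrow> 'a \<Rightarrow> real^2" where
  "qmp_M J x j = (1 / (real (card J) + 1)) *\<^sub>R (x j + (\<Sum>i\<in>J. x i))"

end

theory Submission
  imports Defs
begin

text \<open>The objective is the maximum of the strictly convex quadratics
  f_j(s) = sum_i |s - x_i|^2 + |s - x_j|^2, and the minimiser of f_j is M_j. At the minimiser s of
  P only the active indices (those with |s - x_j| maximal) matter to first order, and the
  directional derivative of f_j at s in direction a is proportional to a . (s - M_j). If s were
  outside the convex hull of the active M_j, a separating direction would decrease every active
  f_j, hence P. So s is a convex combination of active M_j, and by Caratheodory's theorem in the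
  plane three of them suffice.\<close>

lemma sum_power2_norm_add_scaleR:
  fixes w :: "'i \<Rightarrow> 'b::real_inner"
  shows "(\<Sum>i\<in>I. (norm (w i + t *\<^sub>R a))\<^sup>2)
       = (\<Sum>i\<in>I. (norm (w i))\<^sup>2) + 2 * t * (a \<bullet> (\<Sum>i\<in>I. w i)) + real (card I) * t\<^sup>2 * (norm a)\<^sup>2"
proof -
  have "(norm (v + t *\<^sub>R a))\<^sup>2 = (norm v)\<^sup>2 + 2 * t * (a \<bullet> v) + t\<^sup>2 * (norm a)\<^sup>2" for v
    unfolding power2_norm_eq_inner
    by (simp add: inner_add_left inner_add_right inner_commute algebra_simps power2_eq_square)
  then show ?thesis
    by (simp add: sum.distrib inner_sum_right sum_distrib_left[symmetric])
qed

lemma eventually_quadratic_neg_at_right: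
  fixes c0 c1 c2 :: real
  assumes "c0 < 0 \<or> (c0 = 0 \<and> c1 < 0)"
  shows "\<forall>\<^sub>F t in at_right 0. c0 + t * c1 + t\<^sup>2 * c2 < 0"
  using assms
proof
  assume "c0 < 0"
  have "((\<lambda>t. c0 + t * c1 + t\<^sup>2 * c2) \<longlongrightarrow> c0 + 0 * c1 + 0\<^sup>2 * c2) (at_right 0)"
    by (intro tendsto_intros)
  with \<open>c0 < 0\<close> show ?thesis
    using order_tendstoD(2) by fastforce
next
  assume c: "c0 = 0 \<and> c1 < 0"
  have "((\<lambda>t. c1 + t * c2) \<longlongrightarrow> c1 + 0 * c2) (at_right 0)"
    by (intro tendsto_intros)
  with c have "\<forall>\<^sub>F t in at_right 0. c1 + t * c2 < 0"
    using order_tendstoD(2) by fastforce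
  then show ?thesis
    using eventually_at_right_less[of "0::real"]
  proof eventually_elim
    case (elim t)
    then have "t * (c1 + t * c2) < 0" by (simp add: mult_pos_neg)
    with c show ?case by (simp add: algebra_simps power2_eq_square)
  qed
qed

lemma convex_hull_image_sparse_weights:
  fixes f :: "'a \<Rightarrow> 'b::euclidean_space"
  assumes "finite J" and "A \<subseteq> J" and "p \<in> convex hull (f ` A)"
  shows "\<exists>lam. (\<forall>j\<in>J. lam j \<ge> 0) \<and> {j\<in>J. lam j \<noteq> 0} \<subseteq> A
           \<and> card {j\<in>J. lam j \<noteq> 0} \<le> DIM('b) + 1
           \<and> p = (\<Sum>j\<in>J. lam j *\<^sub>R f j) \<and> (\<Sum>j\<in>J. lam j) = 1"
proof -
  obtain S where S: "finite S" "S \<subseteq> f ` A" "card S \<le> DIM('b) + 1" "p \<in> convex hull S"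
    using assms(3) caratheodory by blast
  obtain u where u: "\<forall>q\<in>S. 0 \<le> u q" "sum u S = 1" "(\<Sum>q\<in>S. u q *\<^sub>R q) = p"
    using S(4) convex_hull_finite[OF S(1)] by auto
  define g where "g q = (SOME j. j \<in> A \<and> f j = q)" for q
  have g: "g q \<in> A \<and> f (g q) = q" if "q \<in> S" for q
  proof -
    have "\<exists>j. j \<in> A \<and> f j = q"
      using S(2) that by auto
    then show ?thesis
      unfolding g_def by (rule someI_ex)
  qed
  have inj: "inj_on g S"
    by (metis g inj_onI)
  have gS: "g ` S \<subseteq> J"
    using g assms(2) by blast
  define lam where "lam j = (if j \<in> g ` S then u (f j) else 0)" for j
  have lam_g: "lam (g q) = u q" if "q \<in> S" for q
    using g[OF that] that unfolding lam_def by auto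
  have support: "{j\<in>J. lam j \<noteq> 0} \<subseteq> g ` S"
    unfolding lam_def by auto
  have sum_over_support: "(\<Sum>j\<in>J. h j) = (\<Sum>q\<in>S. h (g q))"
    if "\<And>j. j \<notin> g ` S \<Longrightarrow> h j = 0" for h :: "'a \<Rightarrow> 'c::comm_monoid_add"
  proof -
    have "(\<Sum>j\<in>J. h j) = (\<Sum>j\<in>g ` S. h j)"
      using assms(1) gS that by (intro sum.mono_neutral_right) auto
    also have "\<dots> = (\<Sum>q\<in>S. h (g q))"
      using sum.reindex[OF inj] by simp
    finally show ?thesis .
  qed
  show ?thesis
  proof (intro exI[of _ lam] conjI ballI)
    show "lam j \<ge> 0" for j
      using u(1) g unfolding lam_def by auto
    show "{j\<in>J. lam j \<noteq> 0} \<subseteq> A"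
      using support g by blast
    have "card {j\<in>J. lam j \<noteq> 0} \<le> card (g ` S)"
      using S(1) support by (intro card_mono) auto
    also have "\<dots> \<le> card S"
      using card_image_le S(1) by blast
    finally show "card {j\<in>J. lam j \<noteq> 0} \<le> DIM('b) + 1"
      using S(3) by simp
    have "(\<Sum>j\<in>J. lam j *\<^sub>R f j) = (\<Sum>q\<in>S. u q *\<^sub>R q)"
      using g lam_g by (subst sum_over_support) (auto simp: lam_def intro: sum.cong)
    then show "p = (\<Sum>j\<in>J. lam j *\<^sub>R f j)"
      using u(3) by simp
    have "(\<Sum>j\<in>J. lam j) = (\<Sum>q\<in>S. u q)"
      using lam_g by (subst sum_over_support) (auto simp: lam_def intro: sum.cong)
    then show "(\<Sum>j\<in>J. lam j) = 1"
      using u(2) by simp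
  qed
qed

lemma qmp_P_eq_Max:
  assumes "finite J" and "J \<noteq> {}"
  shows "qmp_P J x s = Max ((\<lambda>j. (\<Sum>i\<in>J. (norm (s - x i))\<^sup>2) + (norm (s - x j))\<^sup>2) ` J)"
proof -
  have "Max ((\<lambda>j. (norm (s - x j))\<^sup>2 + (\<Sum>i\<in>J. (norm (s - x i))\<^sup>2)) ` J)
      = Max ((\<lambda>j. (norm (s - x j))\<^sup>2) ` J) + (\<Sum>i\<in>J. (norm (s - x i))\<^sup>2)"
    by (rule Max_add_commute[OF assms])
  then show ?thesis
    unfolding qmp_P_def by (simp only: add.commute)
qed

lemma Max_power2_norm:
  assumes "finite J" and "J \<noteq> {}"
  shows "Max ((\<lambda>i. (norm (v i))\<^sup>2) ` J) = (Max ((\<lambda>i. norm (v i)) ` J))\<^sup>2"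
proof (rule Max_eqI)
  show "finite ((\<lambda>i. (norm (v i))\<^sup>2) ` J)"
    using assms(1) by simp
  have "Max ((\<lambda>i. norm (v i)) ` J) \<in> (\<lambda>i. norm (v i)) ` J"
    using assms by (intro Max_in) auto
  then obtain j where "j \<in> J" "norm (v j) = Max ((\<lambda>i. norm (v i)) ` J)"
    by auto
  then show "(Max ((\<lambda>i. norm (v i)) ` J))\<^sup>2 \<in> (\<lambda>i. (norm (v i))\<^sup>2) ` J"
    by force
  fix y
  assume "y \<in> (\<lambda>i. (norm (v i))\<^sup>2) ` J"
  then show "y \<le> (Max ((\<lambda>i. norm (v i)) ` J))\<^sup>2"
    using assms(1) by (auto intro!: power_mono)
qed

lemma qmp_sum_diff_eq_M:
  "(\<Sum>i\<in>J. s - x i) + (s - x j) = (real (card J) + 1) *\<^sub>R (s - qmp_M J x j)"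
  unfolding qmp_M_def
  by (simp add: sum_subtractf sum_constant_scaleR algebra_simps del: sum_constant)

lemma qmp_branch_add_scaleR:
  "(\<Sum>i\<in>J. (norm (s + t *\<^sub>R a - x i))\<^sup>2) + (norm (s + t *\<^sub>R a - x j))\<^sup>2
   = (\<Sum>i\<in>J. (norm (s - x i))\<^sup>2) + (norm (s - x j))\<^sup>2
     + t * (2 * (real (card J) + 1) * (a \<bullet> (s - qmp_M J x j)))
     + t\<^sup>2 * ((real (card J) + 1) * (norm a)\<^sup>2)"
proof -
  have shift: "s + t *\<^sub>R a - v = (s - v) + t *\<^sub>R a" for v
    by (simp add: algebra_simps)
  have "(\<Sum>i\<in>J. (norm (s + t *\<^sub>R a - x i))\<^sup>2) + (norm (s + t *\<^sub>R a - x j))\<^sup>2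
      = (\<Sum>i\<in>J. (norm (s - x i))\<^sup>2) + (norm (s - x j))\<^sup>2
        + 2 * t * (a \<bullet> ((\<Sum>i\<in>J. s - x i) + (s - x j)))
        + (real (card J) + 1) * t\<^sup>2 * (norm a)\<^sup>2"
    using sum_power2_norm_add_scaleR[of "\<lambda>i. s - x i" t a J]
      sum_power2_norm_add_scaleR[of "\<lambda>_. s - x j" t a "{j}"]
    unfolding shift by (simp add: inner_add_right algebra_simps)
  then show ?thesis
    unfolding qmp_sum_diff_eq_M by (simp add: algebra_simps)
qed

lemma qmp_P_descent:
  fixes J :: "'a set" and x :: "'a \<Rightarrow> real^2" and s :: "real^2"
  defines "R \<equiv> Max ((\<lambda>i. norm (s - x i)) ` J)"
  assumes "finite J" and "J \<noteq> {}"
    and "\<And>j. j \<in> J \<Longrightarrow> norm (s - x j) = R \<Longrightarrow> a \<bullet> s < a \<bullet> qmp_M J x j"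
  shows "\<exists>t. qmp_P J x (s + t *\<^sub>R a) < qmp_P J x s"
proof -
  let ?f = "\<lambda>j s. (\<Sum>i\<in>J. (norm (s - x i))\<^sup>2) + (norm (s - x j))\<^sup>2"
  have P_s: "qmp_P J x s = (\<Sum>i\<in>J. (norm (s - x i))\<^sup>2) + R\<^sup>2"
    unfolding qmp_P_def R_def Max_power2_norm[OF assms(2,3)] ..
  have branch_decreases: "\<forall>\<^sub>F t in at_right 0. ?f j (s + t *\<^sub>R a) < qmp_P J x s"
    if "j \<in> J" for j
  proof -
    have "norm (s - x j) \<le> R"
      unfolding R_def using assms(2) that by simp
    then consider "norm (s - x j) < R" | "norm (s - x j) = R"
      by linarith
    then have "(norm (s - x j))\<^sup>2 - R\<^sup>2 < 0
      \<or> ((norm (s - x j))\<^sup>2 - R\<^sup>2 = 0 \<and> 2 * (real (card J) + 1) * (a \<bullet> (s - qmp_M J x j)) < 0)"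
    proof cases
      case 1
      then show ?thesis
        using norm_ge_zero power_strict_mono[of "norm (s - x j)" R 2] by auto
    next
      case 2
      then have "a \<bullet> (s - qmp_M J x j) < 0"
        using assms(4)[OF that] by (simp add: inner_diff_right)
      with 2 show ?thesis
        by (simp add: mult_pos_neg)
    qed
    from eventually_quadratic_neg_at_right[OF this, of "(real (card J) + 1) * (norm a)\<^sup>2"]
    show ?thesis
    proof eventually_elim
      case (elim t)
      then show ?case
        using qmp_branch_add_scaleR[where J = J and s = s and t = t and a = a and x = x and j = j] P_s
        by linarith
    qed
  qed
  have "\<forall>\<^sub>F t in at_right 0. \<forall>j\<in>J. ?f j (s + t *\<^sub>R a) < qmp_P J x s"
    by (rule eventually_ball_finite[OF assms(2)]) (simp add: branch_decreases)
  then obtain t where "\<forall>j\<in>J. ?f j (s + t *\<^sub>R a) < qmp_P J x s"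
    using eventually_happens trivial_limit_at_right_real by blast
  then have "qmp_P J x (s + t *\<^sub>R a) < qmp_P J x s"
    unfolding qmp_P_eq_Max[OF assms(2,3)] using assms(2,3) by (subst Max_less_iff) auto
  then show ?thesis ..
qed

lemma qmp_minimiser_in_convex_hull_active:
  fixes x :: "'a \<Rightarrow> real^2"
  assumes "finite J" and "J \<noteq> {}" and "\<forall>t. qmp_P J x s \<le> qmp_P J x t"
  shows "s \<in> convex hull
           (qmp_M J x ` {j\<in>J. norm (s - x j) = Max ((\<lambda>i. norm (s - x i)) ` J)})"
    (is "s \<in> convex hull (qmp_M J x ` ?A)")
proof (rule ccontr)
  assume "s \<notin> convex hull (qmp_M J x ` ?A)"
  moreover have "closed (convex hull (qmp_M J x ` ?A))"
    using assms(1) by (intro compact_imp_closed compact_convex_hull finite_imp_compact) simp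
  ultimately obtain a b where "a \<bullet> s < b" "\<forall>y\<in>convex hull (qmp_M J x ` ?A). b < a \<bullet> y"
    using separating_hyperplane_closed_point[OF convex_convex_hull] by blast
  then have "a \<bullet> s < a \<bullet> qmp_M J x j" if "j \<in> ?A" for j
    using that hull_inc[of "qmp_M J x j" "qmp_M J x ` ?A" convex] by force
  then obtain t where "qmp_P J x (s + t *\<^sub>R a) < qmp_P J x s"
    using qmp_P_descent[OF assms(1,2)] by blast
  with assms(3) show False
    using not_less by blast
qed

theorem lemma5:
  fixes J :: "'a set" and x :: "'a \<Rightarrow> real^2" and s :: "real^2"
  assumes "finite J" and "J \<noteq> {}"
    and "\<forall>t. qmp_P J x s \<le> qmp_P J x t"
    and "\<forall>t. (\<forall>u. qmp_P J x t \<le> qmp_P J x u) \<longrightarrow> t = s"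
  shows "\<exists>lam :: 'a \<Rightarrow> real.
           (\<forall>j\<in>J. lam j \<ge> 0)
         \<and> card {j\<in>J. lam j \<noteq> 0} \<le> 3
         \<and> s = (\<Sum>j\<in>J. lam j *\<^sub>R qmp_M J x j)
         \<and> (\<Sum>j\<in>J. lam j) = 1
         \<and> (\<forall>j\<in>J. lam j * (norm (s - x j) - Max ((\<lambda>i. norm (s - x i)) ` J)) = 0)"
proof -
  let ?A = "{j\<in>J. norm (s - x j) = Max ((\<lambda>i. norm (s - x i)) ` J)}"
  obtain lam where "\<forall>j\<in>J. lam j \<ge> 0" and support: "{j\<in>J. lam j \<noteq> 0} \<subseteq> ?A"
    and "card {j\<in>J. lam j \<noteq> 0} \<le> DIM(real^2) + 1"
    and "s = (\<Sum>j\<in>J. lam j *\<^sub>R qmp_M J x j)" and "(\<Sum>j\<in>J. lam j) = 1"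
    using convex_hull_image_sparse_weights[OF assms(1) _
        qmp_minimiser_in_convex_hull_active[OF assms(1-3)]] by blast
  moreover have "\<forall>j\<in>J. lam j * (norm (s - x j) - Max ((\<lambda>i. norm (s - x i)) ` J)) = 0"
    using support by auto
  ultimately show ?thesis
    by auto
qed

end
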